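(* Let $(X_n)$ be a stationary discrete-in-time Markov process on $\mathbb{R}^d$ with positive transition density $p(x,y)$, ergodic with respect to a unique invariant probability $\mu(\mathrm{d}x)=\pi(x)\mathrm{d}x$, $\pi>0$ (reversibility is not assumed). Let $A,B\subset\mathbb{R}^d$ be disjoint closed sets with smooth boundaries such that $(A\cup B)^c\ne\emptyset$, let $k_{AB}$ be the transition rate from $A$ to $B$, $k_{BA}$ the rate from $B$ to $A$, and $q$ the forward committor. Then: (1) $k_{AB}=k_{BA}$; (2) $k_{AB}=\int_A\left[\int_{\mathbb{R}^d}p(x,y)q(y)\,\mathrm{d}y\right]\mu(\mathrm{d}x)=\int_B\left[\int_{\mathbb{R}^d}p(x,y)(1-q(y))\,\mathrm{d}y\right]\mu(\mathrm{d}x)$; (3) $k_{AB}=\mathcal{E}(q)=\frac12\int_{\mathbb{R}^d}\left[\int_{\mathbb{R}^d}p(x,y)(q(y)-q(x))^2\,\mathrm{d}y\right]\mu(\mathrm{d}x)$.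
   Context: A trajectory segment $X_m,X_{m+1},\dots,X_{m+j}$ ($m\ge0$, $j\ge1$) is reactive (from $A$ to $B$) if $X_m\in A$, $X_{m+j}\in B$ and $X_i\in(A\cup B)^c$ for $m<i<m+j$. With $M_N^R$ the number of reactive segments starting within the first $N$ steps of a trajectory, $k_{AB}=\lim_{N\to\infty}M_N^R/N$; $k_{BA}$ is defined symmetrically. The committor is $q(x)=\mathbb{P}(\text{starting from }x,\ X_n\text{ enters }B\text{ before }A)$; it satisfies $(\mathcal{T}q)(x)=q(x)$ on $(A\cup B)^c$, $q|_A\equiv0$, $q|_B\equiv1$, where $(\mathcal{T}f)(x)=\int p(x,y)f(y)\,\mathrm{d}y$. $\mathcal{E}(f)=\frac12\int\int(f(y)-f(x))^2p(x,y)\,\mathrm{d}y\,\mu(\mathrm{d}x)$. *)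

theory Defs
  imports "HOL-Probability.Probability"
begin

fun Cn_on :: "nat \<Rightarrow> ('a::euclidean_space) set \<Rightarrow> ('a \<Rightarrow> real) \<Rightarrow> bool" where
  "Cn_on 0 U f = continuous_on U f"
| "Cn_on (Suc n) U f =
     ((\<forall>x\<in>U. f differentiable (at x)) \<and>
      (\<forall>i\<in>Basis. Cn_on n U (\<lambda>x. frechet_derivative f (at x) i)))"

definition smooth_on :: "('a::euclidean_space) set \<Rightarrow> ('a \<Rightarrow> real) \<Rightarrow> bool" where
  "smooth_on U f \<longleftrightarrow> (\<forall>n. Cn_on n U f)"

definition smooth_boundary :: "('a::euclidean_space) set \<Rightarrow> bool" where
  "smooth_boundary A \<longleftrightarrow>
     (\<forall>z\<in>frontier A. \<exists>U f. open U \<and> z \<in> U \<and> smooth_on U f \<and>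
        (\<exists>v. frechet_derivative f (at z) v \<noteq> 0) \<and> A \<inter> U = {x\<in>U. f x \<le> 0})"

text \<open>path_prob p n C x = P_x(X_1 \<in> C 0, ..., X_n \<in> C (n-1)) for the chain with
  transition density p started at x.\<close>
fun path_prob :: "('a::euclidean_space \<Rightarrow> 'a \<Rightarrow> real) \<Rightarrow> nat \<Rightarrow> (nat \<Rightarrow> 'a set) \<Rightarrow> 'a \<Rightarrow> real" where
  "path_prob p 0 C x = 1"
| "path_prob p (Suc n) C x =
     (LINT y|lborel. indicator (C 0) y * p x y * path_prob p n (\<lambda>i. C (Suc i)) y)"

text \<open>Forward committor: probability, starting from x, to enter B before A
  (q = 0 on A, q = 1 on B; otherwise the sum over the first entrance time n+1 into A \<union> B,
  with the entrance happening in B).\<close>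
definition committor :: "('a::euclidean_space \<Rightarrow> 'a \<Rightarrow> real) \<Rightarrow> 'a set \<Rightarrow> 'a set \<Rightarrow> 'a \<Rightarrow> real" where
  "committor p A B x =
     (if x \<in> A then 0 else if x \<in> B then 1
      else (\<Sum>n. path_prob p (Suc n) (\<lambda>i. if i < n then - (A \<union> B) else B) x))"

definition reactive :: "(nat \<Rightarrow> 'w \<Rightarrow> 'a) \<Rightarrow> 'a set \<Rightarrow> 'a set \<Rightarrow> nat \<Rightarrow> 'w \<Rightarrow> bool" where
  "reactive X A B m \<omega> \<longleftrightarrow>
     X m \<omega> \<in> A \<and> (\<exists>j\<ge>1. X (m + j) \<omega> \<in> B \<and> (\<forall>i. m < i \<and> i < m + j \<longrightarrow> X i \<omega> \<notin> A \<union> B))"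

definition num_reactive :: "(nat \<Rightarrow> 'w \<Rightarrow> 'a) \<Rightarrow> 'a set \<Rightarrow> 'a set \<Rightarrow> nat \<Rightarrow> 'w \<Rightarrow> nat" where
  "num_reactive X A B N \<omega> = card {m. m < N \<and> reactive X A B m \<omega>}"

definition ergodic_process :: "'w measure \<Rightarrow> (nat \<Rightarrow> 'w \<Rightarrow> 'a::topological_space) \<Rightarrow> bool" where
  "ergodic_process M X \<longleftrightarrow>
     (\<forall>S \<in> sets (Pi\<^sub>M UNIV (\<lambda>_. borel :: 'a measure)).
        (\<forall>f. f \<in> S \<longleftrightarrow> (\<lambda>n. f (Suc n)) \<in> S) \<longrightarrow>
        measure M {\<omega>\<in>space M. (\<lambda>n. X n \<omega>) \<in> S} \<in> {0, 1})"

end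

theory Submission
  imports Defs
begin

text \<open>
  Write \<open>\<T>h x = \<integral> p x y h y dy\<close> (\<open>transition_op\<close> below). Invariance of \<open>\<pi>\<close> says \<open>\<integral> \<pi> \<T>h = \<integral> \<pi> h\<close> for bounded \<open>h\<close>.
  The committor is harmonic (\<open>\<T>q = q\<close>) off \<open>A \<union> B\<close>, vanishes on \<open>A\<close> and equals \<open>1\<close> on \<open>B\<close>,
  so integrating \<open>\<T>q - q\<close> against \<open>\<pi>\<close> gives \<open>\<integral>\<^sub>A \<pi> \<T>q = \<integral>\<^sub>B \<pi> \<T>(1 - q)\<close>, and
  expanding the square shows that the energy \<open>\<E>(q)\<close> equals \<open>\<integral> \<pi> q (q - \<T>q) = \<integral>\<^sub>B \<pi> \<T>(1 - q)\<close>.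

  A segment starting at time \<open>m\<close> is reactive iff the path shifted by \<open>m\<close> lies in a fixed set \<open>R\<close> of
  paths, so \<open>M\<^sub>N\<^sup>R / N\<close> is a Birkhoff average of the indicator of \<open>R\<close>. The chain is stationary
  (invariance again), and for stationary processes that are ergodic in the sense of the 0-1 law for
  shift-invariant events we prove the ergodic theorem for bounded path functionals, via the maximal
  inequality. The limit \<open>P(X \<in> R)\<close> is computed by decomposing according to the first entrance
  into \<open>A \<union> B\<close>, which gives \<open>\<integral>\<^sub>A \<pi> \<T>q\<close>. Reactive segments from \<open>A\<close> to \<open>B\<close> and from
  \<open>B\<close> to \<open>A\<close> alternate, so their counts differ by at most one and \<open>k\<^sub>A\<^sub>B = k\<^sub>B\<^sub>A\<close>.
\<close>

section \<open>Transition densities with an invariant density\<close>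

lemma integrable_bounded_mult:
  fixes f :: "'b \<Rightarrow> real"
  assumes "integrable N f" "(\<lambda>x. f x * h x) \<in> borel_measurable N" "\<And>x. \<bar>h x\<bar> \<le> c"
  shows "integrable N (\<lambda>x. f x * h x)"
proof -
  have "norm (f x * h x) \<le> norm (c * f x)" for x
  proof -
    have "\<bar>h x\<bar> \<le> \<bar>c\<bar>"
      using assms(3)[of x] by linarith
    then have "\<bar>f x\<bar> * \<bar>h x\<bar> \<le> \<bar>f x\<bar> * \<bar>c\<bar>"
      by (rule mult_left_mono) simp
    then show ?thesis
      by (simp add: abs_mult mult.commute)
  qed
  moreover have "integrable N (\<lambda>x. c * f x)"
    using assms(1) by simp
  ultimately show ?thesis
    using Bochner_Integration.integrable_bound[OF _ assms(2)] by blast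
qed

locale transition_density =
  fixes p :: "'a::euclidean_space \<Rightarrow> 'a \<Rightarrow> real" and \<pi> :: "'a \<Rightarrow> real"
  assumes p_meas: "(\<lambda>(x, y). p x y) \<in> borel_measurable (borel \<Otimes>\<^sub>M borel)"
    and p_pos: "\<And>x y. p x y > 0"
    and p_int: "\<And>x. integrable lborel (p x)"
    and p_norm: "\<And>x. (LINT y|lborel. p x y) = 1"
    and pi_meas: "\<pi> \<in> borel_measurable borel"
    and pi_pos: "\<And>x. \<pi> x > 0"
    and pi_int: "integrable lborel \<pi>"
    and pi_norm: "(LINT x|lborel. \<pi> x) = 1"
    and pi_invariant: "AE y in lborel. (LINT x|lborel. \<pi> x * p x y) = \<pi> y"
begin

abbreviation transition_op :: "('a \<Rightarrow> real) \<Rightarrow> 'a \<Rightarrow> real" where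
  "transition_op h x \<equiv> LINT y|lborel. p x y * h y"

lemma p_measurable_pair:
  assumes "sets N1 = sets borel" "sets N2 = sets borel"
  shows "(\<lambda>(x, y). p x y) \<in> borel_measurable (N1 \<Otimes>\<^sub>M N2)"
  using p_meas measurable_cong_sets[OF sets_pair_measure_cong[OF assms] refl] by blast

lemma p_measurable[measurable]: "(\<lambda>z. p (fst z) (snd z)) \<in> borel_measurable (borel \<Otimes>\<^sub>M lborel)"
  using p_measurable_pair[of borel lborel] by (simp add: case_prod_beta')

lemma p_measurable_swap[measurable]: "(\<lambda>z. p (snd z) (fst z)) \<in> borel_measurable (borel \<Otimes>\<^sub>M lborel)"
  using measurable_compose[OF measurable_pair_swap' p_measurable_pair[of lborel borel]]
  by (simp add: case_prod_beta')

lemma pi_measurable[measurable]: "\<pi> \<in> borel_measurable lborel"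
  using pi_meas by simp

lemma transition_op_measurable[measurable]:
  assumes [measurable]: "h \<in> borel_measurable borel"
  shows "transition_op h \<in> borel_measurable borel"
  by (rule lborel.borel_measurable_lebesgue_integral[where f="\<lambda>x y. p x y * h y"]) measurable

lemma integrable_transition:
  assumes [measurable]: "h \<in> borel_measurable borel" and "\<And>y. \<bar>h y\<bar> \<le> c"
  shows "integrable lborel (\<lambda>y. p x y * h y)"
proof -
  have [measurable]: "p x \<in> borel_measurable borel"
    using borel_measurable_integrable[OF p_int[of x]] by simp
  show ?thesis
    by (rule integrable_bounded_mult[OF p_int _ assms(2)]) measurable
qed

lemma integrable_density_mult:
  assumes [measurable]: "h \<in> borel_measurable borel" and "\<And>y. \<bar>h y\<bar> \<le> c"
  shows "integrable lborel (\<lambda>x. \<pi> x * h x)"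
  by (rule integrable_bounded_mult[OF pi_int _ assms(2)]) measurable

lemma transition_op_nonneg: "(\<And>y. 0 \<le> h y) \<Longrightarrow> 0 \<le> transition_op h x"
  using p_pos by (intro Bochner_Integration.integral_nonneg) (simp add: less_imp_le)

lemma abs_transition_op_le:
  assumes [measurable]: "h \<in> borel_measurable borel" and h: "\<And>y. \<bar>h y\<bar> \<le> c"
  shows "\<bar>transition_op h x\<bar> \<le> c"
proof -
  have "\<bar>transition_op h x\<bar> \<le> (LINT y|lborel. \<bar>p x y * h y\<bar>)"
    by (rule integral_abs_bound)
  also have "\<dots> \<le> (LINT y|lborel. c * p x y)"
  proof (rule integral_mono)
    show "integrable lborel (\<lambda>y. \<bar>p x y * h y\<bar>)"
      using integrable_transition[OF assms] by (rule integrable_abs)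
    show "\<bar>p x y * h y\<bar> \<le> c * p x y" for y
      using h[of y] p_pos[of x y] by (simp add: abs_mult mult.commute)
  qed (use p_int in simp)
  also have "\<dots> = c"
    using p_norm by simp
  finally show ?thesis .
qed

lemma transition_op_diff_const:
  assumes [measurable]: "h \<in> borel_measurable borel" and "\<And>y. \<bar>h y\<bar> \<le> c"
  shows "(LINT y|lborel. p x y * (a - h y)) = a - transition_op h x"
proof -
  have "(LINT y|lborel. p x y * (a - h y)) = (LINT y|lborel. a * p x y - p x y * h y)"
    by (simp add: algebra_simps)
  also have "\<dots> = a - transition_op h x"
    using p_int integrable_transition[OF assms] p_norm by simp
  finally show ?thesis .
qed

lemma integrable_density_transition:
  assumes [measurable]: "h \<in> borel_measurable borel" and h: "\<And>y. \<bar>h y\<bar> \<le> c"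
  shows "integrable (lborel \<Otimes>\<^sub>M lborel) (\<lambda>(x, y). \<pi> x * p x y * h y)"
proof -
  have [measurable]: "(\<lambda>(x, y). \<pi> x * p x y) \<in> borel_measurable (lborel \<Otimes>\<^sub>M lborel)"
    using p_measurable_pair[of lborel lborel] by (simp add: case_prod_beta') measurable
  have "(\<integral>\<^sup>+z. ennreal (case z of (x, y) \<Rightarrow> \<pi> x * p x y) \<partial>(lborel \<Otimes>\<^sub>M lborel))
      = (\<integral>\<^sup>+x. ennreal (\<pi> x) * (\<integral>\<^sup>+y. ennreal (p x y) \<partial>lborel) \<partial>lborel)"
    using borel_measurable_integrable[OF p_int] pi_pos p_pos
    by (subst lborel.nn_integral_fst[symmetric])
      (auto simp: case_prod_beta' ennreal_mult less_imp_le nn_integral_cmult[symmetric]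
            intro!: nn_integral_cong)
  also have "\<dots> = 1"
    using p_int p_norm pi_int pi_norm p_pos pi_pos
    by (simp add: nn_integral_eq_integral less_imp_le)
  moreover have "AE z in lborel \<Otimes>\<^sub>M lborel. 0 \<le> (\<lambda>(x, y). \<pi> x * p x y) z"
    using pi_pos p_pos by (intro AE_I2) (simp add: case_prod_beta' less_imp_le)
  ultimately have "integrable (lborel \<Otimes>\<^sub>M lborel) (\<lambda>(x, y). \<pi> x * p x y)"
    by (intro integrableI_nonneg) auto
  then have "integrable (lborel \<Otimes>\<^sub>M lborel) (\<lambda>z. \<pi> (fst z) * p (fst z) (snd z))"
    by (simp add: case_prod_beta')
  then have "integrable (lborel \<Otimes>\<^sub>M lborel) (\<lambda>z. \<pi> (fst z) * p (fst z) (snd z) * h (snd z))"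
    by (rule integrable_bounded_mult[where h="\<lambda>z. h (snd z)" and c=c]) (auto simp: h)
  then show ?thesis
    by (simp add: case_prod_beta')
qed

lemma integral_density_transition_op:
  assumes [measurable]: "h \<in> borel_measurable borel" and "\<And>y. \<bar>h y\<bar> \<le> c"
  shows "(LINT x|lborel. \<pi> x * transition_op h x) = (LINT y|lborel. \<pi> y * h y)"
proof -
  have "(LINT x|lborel. \<pi> x * transition_op h x) = (LINT x|lborel. LINT y|lborel. \<pi> x * p x y * h y)"
    by (simp add: mult.assoc)
  also have "\<dots> = (LINT y|lborel. LINT x|lborel. \<pi> x * p x y * h y)"
    using integrable_density_transition[OF assms]
    by (intro pair_sigma_finite.Fubini_integral[symmetric])
      (auto simp: pair_sigma_finite_def lborel.sigma_finite_measure_axioms)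
  also have "\<dots> = (LINT y|lborel. (LINT x|lborel. \<pi> x * p x y) * h y)"
    by simp
  also have "\<dots> = (LINT y|lborel. \<pi> y * h y)"
  proof (intro integral_cong_AE)
    have "(\<lambda>y. LINT x|lborel. \<pi> x * p x y) \<in> borel_measurable borel"
      by (rule lborel.borel_measurable_lebesgue_integral[where f="\<lambda>y x. \<pi> x * p x y"]) measurable
    then show "(\<lambda>y. (LINT x|lborel. \<pi> x * p x y) * h y) \<in> borel_measurable lborel"
      by simp
  qed (use pi_invariant in auto)
  finally show ?thesis .
qed

lemma path_prob_Suc_transition_op:
  "path_prob p (Suc n) C x = transition_op (\<lambda>y. indicator (C 0) y * path_prob p n (\<lambda>i. C (Suc i)) y) x"
  by (simp add: ac_simps)

lemma path_prob_measurable[measurable]: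
  "(\<And>i. C i \<in> sets borel) \<Longrightarrow> path_prob p n C \<in> borel_measurable borel"
proof (induction n arbitrary: C)
  case 0
  have "path_prob p 0 C = (\<lambda>_. 1)"
    by auto
  then show ?case
    by simp
next
  case (Suc n)
  then show ?case
    unfolding path_prob_Suc_transition_op by measurable
qed

lemma path_prob_bounds:
  assumes "\<And>i. C i \<in> sets borel"
  shows "0 \<le> path_prob p n C x \<and> path_prob p n C x \<le> 1"
  using assms
proof (induction n arbitrary: C x)
  case (Suc n)
  define h where "h y = indicator (C 0) y * path_prob p n (\<lambda>i. C (Suc i)) y" for y
  have [measurable]: "h \<in> borel_measurable borel"
    using Suc.prems unfolding h_def by measurable
  have h: "0 \<le> h y \<and> h y \<le> 1" for y
    using Suc by (auto simp: h_def indicator_def)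
  then have "\<bar>transition_op h x\<bar> \<le> 1"
    by (intro abs_transition_op_le) auto
  moreover have "0 \<le> transition_op h x"
    using h by (intro transition_op_nonneg) auto
  ultimately show ?case
    unfolding path_prob_Suc_transition_op h_def[symmetric] by simp
qed simp

lemma path_prob_cong:
  "(\<And>i. i < n \<Longrightarrow> C i = D i) \<Longrightarrow> path_prob p n C x = path_prob p n D x"
proof (induction n arbitrary: C D x)
  case (Suc n)
  have "path_prob p n (\<lambda>i. C (Suc i)) y = path_prob p n (\<lambda>i. D (Suc i)) y" for y
    by (rule Suc.IH) (simp add: Suc.prems)
  moreover have "C 0 = D 0"
    by (simp add: Suc.prems)
  ultimately show ?case
    by simp
qed simp

lemma integral_density_path_prob_Suc:
  assumes "\<And>i. C i \<in> sets borel"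
  shows "(LINT x|lborel. \<pi> x * path_prob p (Suc n) C x)
       = (LINT x|lborel. indicator (C 0) x * \<pi> x * path_prob p n (\<lambda>i. C (Suc i)) x)"
proof -
  define h where "h y = indicator (C 0) y * path_prob p n (\<lambda>i. C (Suc i)) y" for y
  have [measurable]: "h \<in> borel_measurable borel"
    using assms unfolding h_def by measurable
  have "\<bar>h y\<bar> \<le> 1" for y
    using path_prob_bounds[of "\<lambda>i. C (Suc i)" n y] assms by (auto simp: h_def indicator_def)
  then have "(LINT x|lborel. \<pi> x * transition_op h x) = (LINT y|lborel. \<pi> y * h y)"
    by (intro integral_density_transition_op) auto
  then show ?thesis
    unfolding path_prob_Suc_transition_op h_def by (simp add: ac_simps)
qed

end

section \<open>The committor\<close>

locale committor_setting = transition_density p \<pi>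
  for p :: "'a::euclidean_space \<Rightarrow> 'a \<Rightarrow> real" and \<pi> +
  fixes A B :: "'a set"
  assumes A_borel[measurable]: "A \<in> sets borel" and B_borel[measurable]: "B \<in> sets borel"
    and AB_disj: "A \<inter> B = {}"
begin

abbreviation q :: "'a \<Rightarrow> real" where
  "q \<equiv> committor p A B"

definition entrance_prob :: "nat \<Rightarrow> 'a \<Rightarrow> real" where
  "entrance_prob n = path_prob p (Suc n) (\<lambda>i. if i < n then - (A \<union> B) else B)"

lemma entrance_prob_measurable[measurable]: "entrance_prob n \<in> borel_measurable borel"
  unfolding entrance_prob_def by (rule path_prob_measurable) auto

lemma entrance_prob_nonneg: "0 \<le> entrance_prob n x"
  using path_prob_bounds by (simp add: entrance_prob_def del: path_prob.simps)

lemma entrance_prob_le_1: "entrance_prob n x \<le> 1"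
  using path_prob_bounds by (simp add: entrance_prob_def del: path_prob.simps)

lemma entrance_prob_0: "entrance_prob 0 x = transition_op (indicator B) x"
  by (simp add: entrance_prob_def ac_simps)

lemma entrance_prob_Suc:
  "entrance_prob (Suc n) x = transition_op (\<lambda>y. indicator (- (A \<union> B)) y * entrance_prob n y) x"
proof -
  have "(\<lambda>i. if Suc i < Suc n then - (A \<union> B) else B) = (\<lambda>i. if i < n then - (A \<union> B) else B)"
    by auto
  then show ?thesis
    unfolding entrance_prob_def path_prob_Suc_transition_op[of "Suc n"] by simp
qed

lemma sum_entrance_prob_Suc:
  "(\<Sum>n<Suc N. entrance_prob n x)
     = transition_op (\<lambda>y. indicator B y + indicator (- (A \<union> B)) y * (\<Sum>n<N. entrance_prob n y)) x"
proof -
  have bounded: "\<bar>indicator (- (A \<union> B)) y * entrance_prob n y\<bar> \<le> 1" for n y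
    using path_prob_bounds
    by (simp add: entrance_prob_def indicator_def del: path_prob.simps)
  have integrable: "integrable lborel (\<lambda>y. p x y * (indicator (- (A \<union> B)) y * entrance_prob n y))" for n
    by (rule integrable_transition[OF _ bounded]) measurable
  have shifted: "(\<Sum>n<N. entrance_prob (Suc n) x)
      = (LINT y|lborel. (\<Sum>n<N. p x y * (indicator (- (A \<union> B)) y * entrance_prob n y)))"
    unfolding entrance_prob_Suc
    by (rule Bochner_Integration.integral_sum[symmetric]) (rule integrable)
  have "(\<Sum>n<Suc N. entrance_prob n x) = entrance_prob 0 x + (\<Sum>n<N. entrance_prob (Suc n) x)"
    by (rule sum.lessThan_Suc_shift)
  also have "\<dots> = (LINT y|lborel. p x y * indicator B y
      + (\<Sum>n<N. p x y * (indicator (- (A \<union> B)) y * entrance_prob n y)))"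
    unfolding shifted entrance_prob_0
    using integrable integrable_transition[of "indicator B" 1]
    by (subst Bochner_Integration.integral_add) auto
  also have "\<dots> = transition_op (\<lambda>y. indicator B y + indicator (- (A \<union> B)) y * (\<Sum>n<N. entrance_prob n y)) x"
    by (simp only: sum_distrib_left distrib_left)
  finally show ?thesis .
qed

lemma sum_entrance_prob_bounds: "0 \<le> (\<Sum>n<N. entrance_prob n x) \<and> (\<Sum>n<N. entrance_prob n x) \<le> 1"
proof (induction N arbitrary: x)
  case (Suc N)
  define h where "h y = indicator B y + indicator (- (A \<union> B)) y * (\<Sum>n<N. entrance_prob n y)" for y
  have [measurable]: "h \<in> borel_measurable borel"
    unfolding h_def by measurable
  have h: "0 \<le> h y \<and> h y \<le> 1" for y
    using Suc.IH[of y] AB_disj by (auto simp: h_def indicator_def)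
  then have "\<bar>transition_op h x\<bar> \<le> 1"
    by (intro abs_transition_op_le) auto
  moreover have "0 \<le> transition_op h x"
    using h by (intro transition_op_nonneg) auto
  ultimately show ?case
    unfolding sum_entrance_prob_Suc h_def[symmetric] by simp
qed simp

lemma summable_entrance_prob: "summable (\<lambda>n. entrance_prob n x)"
  using entrance_prob_nonneg sum_entrance_prob_bounds
  by (intro summableI_nonneg_bounded[where x=1]) auto

lemma committor_eq:
  "q y = indicator B y + indicator (- (A \<union> B)) y * (\<Sum>n. entrance_prob n y)"
  using AB_disj by (auto simp: committor_def entrance_prob_def indicator_def)

lemma committor_measurable[measurable]: "q \<in> borel_measurable borel"
  unfolding committor_eq[abs_def] by measurable

lemma committor_bounds: "0 \<le> q y" "q y \<le> 1"
proof -
  have "0 \<le> (\<Sum>n. entrance_prob n y)"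
    using summable_entrance_prob entrance_prob_nonneg by (rule suminf_nonneg)
  moreover have "(\<Sum>n. entrance_prob n y) \<le> 1"
    using sum_entrance_prob_bounds by (intro suminf_le_const summable_entrance_prob) blast
  ultimately show "0 \<le> q y" "q y \<le> 1"
    using AB_disj by (auto simp: committor_eq indicator_def)
qed

lemma transition_op_committor: "transition_op q x = (\<Sum>n. entrance_prob n x)"
proof -
  have partial_sums: "(\<lambda>N. \<Sum>n<N. entrance_prob n y) \<longlonglongrightarrow> (\<Sum>n. entrance_prob n y)" for y
    using summable_entrance_prob by (simp add: summable_LIMSEQ)
  have "(\<lambda>N. \<Sum>n<Suc N. entrance_prob n x) \<longlonglongrightarrow> transition_op q x"
    unfolding sum_entrance_prob_Suc
  proof (rule integral_dominated_convergence[where w="p x"])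
    have [measurable]: "p x \<in> borel_measurable borel"
      using borel_measurable_integrable[OF p_int[of x]] by simp
    show "(\<lambda>y. p x y * q y) \<in> borel_measurable lborel"
      "(\<lambda>y. p x y * (indicator B y + indicator (- (A \<union> B)) y * (\<Sum>n<N. entrance_prob n y)))
         \<in> borel_measurable lborel" for N
      by measurable
    show "AE y in lborel. (\<lambda>N. p x y * (indicator B y + indicator (- (A \<union> B)) y * (\<Sum>n<N. entrance_prob n y)))
        \<longlonglongrightarrow> p x y * q y"
      unfolding committor_eq using partial_sums by (intro AE_I2 tendsto_intros)
    show "AE y in lborel. norm (p x y * (indicator B y + indicator (- (A \<union> B)) y * (\<Sum>n<N. entrance_prob n y)))
        \<le> p x y" for N
    proof (rule AE_I2)
      fix y
      let ?h = "indicator B y + indicator (- (A \<union> B)) y * (\<Sum>n<N. entrance_prob n y) :: real"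
      have "\<bar>?h\<bar> \<le> 1"
      proof (cases "y \<in> A \<union> B")
        case True
        then show ?thesis
          using AB_disj by (auto simp: indicator_def)
      next
        case False
        then show ?thesis
          using sum_entrance_prob_bounds[where N=N and x=y] by simp
      qed
      then show "norm (p x y * ?h) \<le> p x y"
        using p_pos[of x y] by (simp add: abs_mult mult_left_le)
    qed
  qed (fact p_int)
  moreover have "(\<lambda>N. \<Sum>n<Suc N. entrance_prob n x) \<longlonglongrightarrow> (\<Sum>n. entrance_prob n x)"
    using LIMSEQ_Suc[OF partial_sums] .
  ultimately show ?thesis
    by (rule LIMSEQ_unique)
qed

lemma committor_harmonic: "x \<notin> A \<Longrightarrow> x \<notin> B \<Longrightarrow> transition_op q x = q x"
  unfolding transition_op_committor by (simp add: committor_eq)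

lemma committor_A: "x \<in> A \<Longrightarrow> q x = 0"
  by (simp add: committor_def)

lemma committor_B: "x \<in> B \<Longrightarrow> q x = 1"
  using AB_disj by (auto simp: committor_def)

lemma abs_committor_le: "\<bar>q y\<bar> \<le> 1"
  using committor_bounds[of y] by simp

lemma abs_transition_op_committor_le: "\<bar>transition_op q x\<bar> \<le> 1"
  using abs_committor_le by (intro abs_transition_op_le) auto

lemma transition_op_committor_nonneg: "0 \<le> transition_op q x"
  using committor_bounds by (intro transition_op_nonneg)

lemma transition_op_committor_minus:
  "transition_op q x - q x = indicator A x * transition_op q x - indicator B x * (1 - transition_op q x)"
proof (cases "x \<in> A \<union> B")
  case True
  then show ?thesis
    using AB_disj by (auto simp: committor_A committor_B indicator_def)
qed (simp add: committor_harmonic)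

lemma committor_times_minus_transition_op:
  "q x * (q x - transition_op q x) = indicator B x * (1 - transition_op q x)"
proof (cases "x \<in> A \<union> B")
  case True
  then show ?thesis
    using AB_disj by (auto simp: committor_A committor_B indicator_def)
qed (simp add: committor_harmonic)

lemma transition_op_one_minus_committor: "(LINT y|lborel. p x y * (1 - q y)) = 1 - transition_op q x"
  using abs_committor_le by (intro transition_op_diff_const) auto

lemma committor_flux_A_eq_B:
  "(LINT x|lborel. indicator A x * \<pi> x * transition_op q x)
     = (LINT x|lborel. indicator B x * \<pi> x * (LINT y|lborel. p x y * (1 - q y)))"
proof -
  have bounded_B: "\<bar>indicator B x * (1 - transition_op q x)\<bar> \<le> 1" for x
    using abs_transition_op_committor_le[of x] transition_op_committor_nonneg[of x]
    by (simp add: indicator_def)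
  have bounded_A: "\<bar>indicator A x * transition_op q x\<bar> \<le> 1" for x
    using abs_transition_op_committor_le[of x] by (simp add: indicator_def)
  have "(LINT x|lborel. \<pi> x * (indicator A x * transition_op q x))
      - (LINT x|lborel. \<pi> x * (indicator B x * (1 - transition_op q x)))
      = (LINT x|lborel. \<pi> x * (transition_op q x - q x))"
    unfolding transition_op_committor_minus
    using integrable_density_mult[OF _ bounded_A] integrable_density_mult[OF _ bounded_B]
    by (simp add: right_diff_distrib)
  also have "\<dots> = (LINT x|lborel. \<pi> x * transition_op q x) - (LINT x|lborel. \<pi> x * q x)"
    using integrable_density_mult[OF _ abs_transition_op_committor_le]
      integrable_density_mult[OF _ abs_committor_le]
    by (simp add: right_diff_distrib)
  also have "\<dots> = 0"
    using integral_density_transition_op[OF _ abs_committor_le] by simp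
  finally show ?thesis
    by (simp add: transition_op_one_minus_committor ac_simps)
qed

lemma transition_op_square_diff:
  "(LINT y|lborel. p x y * (q y - q x)^2)
     = transition_op (\<lambda>y. (q y)^2) x - 2 * q x * transition_op q x + (q x)^2"
proof -
  have "\<bar>(q y)^2\<bar> \<le> 1" for y
    using committor_bounds[of y] by (simp add: power_le_one)
  then have "integrable lborel (\<lambda>y. p x y * (q y)^2)"
    by (intro integrable_transition) auto
  moreover have "integrable lborel (\<lambda>y. p x y * q y)"
    using abs_committor_le by (intro integrable_transition) auto
  ultimately have "(LINT y|lborel. p x y * (q y)^2 - 2 * q x * (p x y * q y) + (q x)^2 * p x y)
      = transition_op (\<lambda>y. (q y)^2) x - 2 * q x * transition_op q x + (q x)^2"
    using p_int p_norm by simp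
  then show ?thesis
    by (simp add: power2_eq_square algebra_simps)
qed

lemma committor_energy:
  "(LINT x|lborel. indicator A x * \<pi> x * transition_op q x)
     = 1/2 * (LINT x|lborel. \<pi> x * (LINT y|lborel. p x y * (q y - q x)^2))"
proof -
  have bounded_sq: "\<bar>(q y)^2\<bar> \<le> 1" for y
    using committor_bounds[of y] by (simp add: power_le_one)
  have bounded_Tsq: "\<bar>transition_op (\<lambda>y. (q y)^2) x\<bar> \<le> 1" for x
    using bounded_sq by (intro abs_transition_op_le) auto
  have bounded_prod: "\<bar>q x * transition_op q x\<bar> \<le> 1" for x
    using committor_bounds[of x] abs_transition_op_committor_le[of x]
    by (simp add: abs_mult mult_le_one)
  have integrable:
    "integrable lborel (\<lambda>x. \<pi> x * (q x)^2)"
    "integrable lborel (\<lambda>x. \<pi> x * transition_op (\<lambda>y. (q y)^2) x)"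
    "integrable lborel (\<lambda>x. \<pi> x * (q x * transition_op q x))"
    by (rule integrable_density_mult, measurable, fact)+
  have "(LINT x|lborel. \<pi> x * (LINT y|lborel. p x y * (q y - q x)^2))
      = (LINT x|lborel. \<pi> x * transition_op (\<lambda>y. (q y)^2) x
          - 2 * (\<pi> x * (q x * transition_op q x)) + \<pi> x * (q x)^2)"
    unfolding transition_op_square_diff by (simp add: algebra_simps)
  also have "\<dots> = (LINT x|lborel. \<pi> x * transition_op (\<lambda>y. (q y)^2) x)
      - 2 * (LINT x|lborel. \<pi> x * (q x * transition_op q x)) + (LINT x|lborel. \<pi> x * (q x)^2)"
    using integrable by simp
  also have "\<dots> = 2 * ((LINT x|lborel. \<pi> x * (q x)^2) - (LINT x|lborel. \<pi> x * (q x * transition_op q x)))"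
    using integral_density_transition_op[OF _ bounded_sq] by simp
  also have "\<dots> = 2 * (LINT x|lborel. \<pi> x * (q x * (q x - transition_op q x)))"
    using integrable by (simp add: power2_eq_square right_diff_distrib)
  also have "\<dots> = 2 * (LINT x|lborel. indicator B x * \<pi> x * (LINT y|lborel. p x y * (1 - q y)))"
    by (simp add: committor_times_minus_transition_op transition_op_one_minus_committor ac_simps)
  finally show ?thesis
    using committor_flux_A_eq_B by simp
qed

end

section \<open>Birkhoff averages and the ergodic theorem\<close>

abbreviation path_space :: "(nat \<Rightarrow> 'a::topological_space) measure" where
  "path_space \<equiv> Pi\<^sub>M UNIV (\<lambda>_. borel)"

definition path_shift :: "nat \<Rightarrow> (nat \<Rightarrow> 'a) \<Rightarrow> nat \<Rightarrow> 'a" where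
  "path_shift m f = (\<lambda>k. f (m + k))"

definition birkhoff_sum :: "((nat \<Rightarrow> 'a) \<Rightarrow> real) \<Rightarrow> nat \<Rightarrow> (nat \<Rightarrow> 'a) \<Rightarrow> real" where
  "birkhoff_sum g n f = (\<Sum>i<n. g (path_shift i f))"

lemma path_shift_path_shift: "path_shift i (path_shift m f) = path_shift (m + i) f"
  by (simp add: path_shift_def add.assoc)

lemma path_shift_0: "path_shift 0 f = f"
  by (simp add: path_shift_def)

lemma path_shift_1: "path_shift 1 f = (\<lambda>n. f (Suc n))"
  by (simp add: path_shift_def)

lemma path_shift_measurable[measurable]:
  "path_shift m \<in> measurable (path_space :: (nat \<Rightarrow> 'a::topological_space) measure) path_space"
  unfolding path_shift_def by (rule measurable_PiM_single') (auto simp: space_PiM)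

lemma birkhoff_sum_measurable[measurable]:
  fixes g :: "(nat \<Rightarrow> 'a::topological_space) \<Rightarrow> real"
  assumes [measurable]: "g \<in> borel_measurable path_space"
  shows "birkhoff_sum g n \<in> borel_measurable path_space"
  unfolding birkhoff_sum_def by measurable

lemma birkhoff_sum_Suc: "birkhoff_sum g (Suc n) f = g f + birkhoff_sum g n (path_shift 1 f)"
  unfolding birkhoff_sum_def by (subst sum.lessThan_Suc_shift) (simp add: path_shift_path_shift path_shift_0)

lemma birkhoff_sum_bounds:
  "(\<And>f. 0 \<le> g f \<and> g f \<le> 1) \<Longrightarrow> 0 \<le> birkhoff_sum g n f \<and> birkhoff_sum g n f \<le> n"
  unfolding birkhoff_sum_def using sum_bounded_above[of "{..<n}" "\<lambda>i. g (path_shift i f)" 1]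
  by (auto intro: sum_nonneg)

text \<open>Chaining the blocks greedily from \<open>m\<close> covers \<open>[m, N)\<close> up to at most \<open>K\<close> final positions.\<close>
lemma sum_ge_of_block_cover:
  fixes h :: "nat \<Rightarrow> real"
  assumes h: "\<And>i. 0 \<le> h i" and a: "0 \<le> a"
    and cover: "\<And>m. \<exists>n. 1 \<le> n \<and> n \<le> K \<and> real n * a \<le> (\<Sum>i<n. h (m + i))"
  shows "(real N - real m - real K) * a \<le> (\<Sum>i\<in>{m..<N}. h i)"
proof (induction m rule: measure_induct_rule[where f="\<lambda>m. N - m"])
  case (less m)
  obtain n where n: "1 \<le> n" "n \<le> K" "real n * a \<le> (\<Sum>i<n. h (m + i))"
    using cover by blast
  show ?case
  proof (cases "m + n \<le> N")
    case True
    have "(\<Sum>i<n. h (m + i)) = (\<Sum>i\<in>{m..<m + n}. h i)"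
      using sum.shift_bounds_nat_ivl[of h 0 m n] by (simp add: lessThan_atLeast0 add.commute)
    moreover have "(\<Sum>i\<in>{m..<N}. h i) = (\<Sum>i\<in>{m..<m + n}. h i) + (\<Sum>i\<in>{m + n..<N}. h i)"
      using True by (intro sum.atLeastLessThan_concat[symmetric]) auto
    moreover have "(real N - real (m + n) - real K) * a \<le> (\<Sum>i\<in>{m + n..<N}. h i)"
      using True n(1) by (intro less) auto
    ultimately show ?thesis
      using n(3) by (simp add: algebra_simps)
  next
    case False
    then have "(real N - real m - real K) * a \<le> 0"
      using n(2) a by (intro mult_nonpos_nonneg) auto
    also have "0 \<le> (\<Sum>i\<in>{m..<N}. h i)"
      using h by (simp add: sum_nonneg)
    finally show ?thesis .
  qed
qed

lemma limsup_average_shift_eq: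
  fixes s t :: "nat \<Rightarrow> real"
  assumes step: "\<And>N. \<bar>s (Suc N) - t N\<bar> \<le> 1" and t: "\<And>N. \<bar>t N\<bar> \<le> real N"
  shows "limsup (\<lambda>N. ereal (s N / real N)) = limsup (\<lambda>N. ereal (t N / real N))"
proof -
  define d where "d N = s (Suc N) / real (Suc N) - t N / real N" for N
  have bound: "\<bar>d N\<bar> \<le> 2 / real (Suc N)" for N
  proof (cases "N = 0")
    case True
    then show ?thesis
      using step[of 0] t[of 0] by (simp add: d_def)
  next
    case False
    then have N: "0 < real N"
      by simp
    have "d N = (s (Suc N) - t N) / real (Suc N) - t N / (real N * real (Suc N))"
      using N unfolding d_def by (simp add: divide_simps) (simp add: algebra_simps)
    then have "\<bar>d N\<bar> \<le> \<bar>(s (Suc N) - t N) / real (Suc N)\<bar> + \<bar>t N / (real N * real (Suc N))\<bar>"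
      by (simp only: abs_triangle_ineq4)
    moreover have "\<bar>t N / (real N * real (Suc N))\<bar> \<le> 1 / real (Suc N)"
      using t[of N] N by (simp add: abs_mult divide_simps)
    moreover have "\<bar>(s (Suc N) - t N) / real (Suc N)\<bar> \<le> 1 / real (Suc N)"
      using step[of N] by (simp add: divide_right_mono)
    moreover have "2 / real (Suc N) = 1 / real (Suc N) + 1 / real (Suc N)"
      by simp
    ultimately show ?thesis
      by linarith
  qed
  have "d \<longlonglongrightarrow> 0"
  proof (rule Lim_null_comparison[where g="\<lambda>N. 2 / real (Suc N)"])
    show "eventually (\<lambda>N. norm (d N) \<le> 2 / real (Suc N)) sequentially"
      using bound by simp
    show "(\<lambda>N. 2 / real (Suc N)) \<longlonglongrightarrow> 0"
      using LIMSEQ_Suc[OF lim_const_over_n[of 2]] by simp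
  qed
  then have "(\<lambda>N. ereal (d N)) \<longlonglongrightarrow> ereal 0"
    by (rule tendsto_ereal)
  have "limsup (\<lambda>N. ereal (s N / real N)) = limsup (\<lambda>N. ereal (s (N + 1) / real (N + 1)))"
    by (rule limsup_shift[symmetric])
  also have "\<dots> = limsup (\<lambda>N. ereal (d N) + ereal (t N / real N))"
    by (simp add: d_def)
  also have "\<dots> = limsup (\<lambda>N. ereal (t N / real N))"
    using ereal_limsup_lim_add[OF \<open>(\<lambda>N. ereal (d N)) \<longlonglongrightarrow> ereal 0\<close>, of "\<lambda>N. ereal (t N / real N)"]
    by simp
  finally show ?thesis .
qed

text \<open>The block decomposition of \<open>sum_ge_of_block_cover\<close> can only get stuck where the shifted
  path lies in this set.\<close>
definition short_blocks_below :: "((nat \<Rightarrow> 'a) \<Rightarrow> real) \<Rightarrow> real \<Rightarrow> nat \<Rightarrow> (nat \<Rightarrow> 'a) set" where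
  "short_blocks_below g a K = {f. \<forall>n\<in>{1..K}. birkhoff_sum g n f < real n * a}"

lemma short_blocks_below_measurable[measurable]:
  fixes g :: "(nat \<Rightarrow> 'a::topological_space) \<Rightarrow> real"
  assumes [measurable]: "g \<in> borel_measurable path_space"
  shows "short_blocks_below g a K \<in> sets path_space"
proof -
  have "short_blocks_below g a K = {f\<in>space path_space. \<forall>n\<in>{1..K}. birkhoff_sum g n f < real n * a}"
    by (auto simp: short_blocks_below_def space_PiM)
  also have "\<dots> \<in> sets path_space"
    by measurable
  finally show ?thesis .
qed

lemma birkhoff_sum_ge_short_blocks_below:
  fixes g :: "(nat \<Rightarrow> 'a) \<Rightarrow> real"
  assumes g: "\<And>f. 0 \<le> g f" and a: "0 < a" and K: "1 \<le> K"
  shows "(real N - real K) * a \<le> birkhoff_sum (\<lambda>f. g f + a * indicator (short_blocks_below g a K) f) N f"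
proof -
  define G where "G f = g f + a * indicator (short_blocks_below g a K) f" for f
  have "\<exists>n. 1 \<le> n \<and> n \<le> K \<and> real n * a \<le> (\<Sum>i<n. G (path_shift (m + i) f))" for m
  proof (cases "path_shift m f \<in> short_blocks_below g a K")
    case True
    then have "a \<le> G (path_shift m f)"
      using g by (simp add: G_def)
    then show ?thesis
      using K by (intro exI[of _ 1]) auto
  next
    case False
    then obtain n where n: "1 \<le> n" "n \<le> K" "real n * a \<le> birkhoff_sum g n (path_shift m f)"
      by (auto simp: short_blocks_below_def not_less)
    moreover have "birkhoff_sum g n (path_shift m f) \<le> (\<Sum>i<n. G (path_shift (m + i) f))"
      unfolding birkhoff_sum_def path_shift_path_shift using a
      by (intro sum_mono) (simp add: G_def)
    ultimately show ?thesis
      by (intro exI[of _ n]) auto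
  qed
  moreover have "0 \<le> G f" for f
    using g[of f] a by (simp add: G_def)
  ultimately show ?thesis
    unfolding G_def[abs_def, symmetric]
    using sum_ge_of_block_cover[where h="\<lambda>i. G (path_shift i f)" and m=0 and N=N and K=K and a=a] a
    by (simp add: birkhoff_sum_def atLeast0LessThan)
qed

definition birkhoff_limsup :: "((nat \<Rightarrow> 'a) \<Rightarrow> real) \<Rightarrow> (nat \<Rightarrow> 'a) \<Rightarrow> ereal" where
  "birkhoff_limsup g f = limsup (\<lambda>N. ereal (birkhoff_sum g N f / real N))"

lemma birkhoff_limsup_measurable[measurable]:
  fixes g :: "(nat \<Rightarrow> 'a::topological_space) \<Rightarrow> real"
  assumes [measurable]: "g \<in> borel_measurable path_space"
  shows "birkhoff_limsup g \<in> borel_measurable path_space"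
  unfolding birkhoff_limsup_def by measurable

lemma birkhoff_limsup_Suc_shift:
  assumes "\<And>f. 0 \<le> g f \<and> g f \<le> 1"
  shows "birkhoff_limsup g (\<lambda>n. f (Suc n)) = birkhoff_limsup g f"
  unfolding birkhoff_limsup_def path_shift_1[symmetric]
proof (rule limsup_average_shift_eq[symmetric])
  show "\<bar>birkhoff_sum g (Suc N) f - birkhoff_sum g N (path_shift 1 f)\<bar> \<le> 1" for N
    using assms[of f] by (simp add: birkhoff_sum_Suc)
  show "\<bar>birkhoff_sum g N (path_shift 1 f)\<bar> \<le> real N" for N
    using birkhoff_sum_bounds[where g=g and n=N and f="path_shift 1 f"] assms by simp
qed

lemma birkhoff_average_one_minus:
  "N \<noteq> 0 \<Longrightarrow> birkhoff_sum (\<lambda>f. 1 - g f) N f / real N = 1 - birkhoff_sum g N f / real N"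
  by (simp add: birkhoff_sum_def sum_subtractf diff_divide_distrib)

lemma LIMSEQ_of_birkhoff_limsup_bounds:
  assumes bounds: "\<forall>j::nat. birkhoff_limsup g f < ereal (k + 1 / Suc j)
      \<and> birkhoff_limsup (\<lambda>h. 1 - g h) f < ereal (1 - k + 1 / Suc j)"
  shows "(\<lambda>N. birkhoff_sum g N f / real N) \<longlonglongrightarrow> k"
proof (rule order_tendstoI)
  fix b
  assume "k < b"
  then obtain j :: nat where "1 / real (Suc j) < b - k"
    by (metis diff_gt_0_iff_gt nat_approx_posE)
  then have "ereal (k + 1 / Suc j) < ereal b"
    by simp
  with conjunct1[OF bounds[rule_format, of j]] have "birkhoff_limsup g f < ereal b"
    by (rule less_trans)
  then show "eventually (\<lambda>N. birkhoff_sum g N f / real N < b) sequentially"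
    unfolding birkhoff_limsup_def by (auto dest: Limsup_lessD)
next
  fix b
  assume "b < k"
  then obtain j :: nat where "1 / real (Suc j) < k - b"
    by (metis diff_gt_0_iff_gt nat_approx_posE)
  then have "ereal (1 - k + 1 / Suc j) < ereal (1 - b)"
    by simp
  with conjunct2[OF bounds[rule_format, of j]]
  have "birkhoff_limsup (\<lambda>h. 1 - g h) f < ereal (1 - b)"
    by (rule less_trans)
  then have "eventually (\<lambda>N. birkhoff_sum (\<lambda>h. 1 - g h) N f / real N < 1 - b) sequentially"
    unfolding birkhoff_limsup_def by (auto dest: Limsup_lessD)
  with eventually_ge_at_top[of 1]
  have "eventually (\<lambda>N. 1 \<le> N \<and> birkhoff_sum (\<lambda>h. 1 - g h) N f / real N < 1 - b) sequentially"
    by (rule eventually_conj)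
  then show "eventually (\<lambda>N. b < birkhoff_sum g N f / real N) sequentially"
  proof (rule eventually_mono)
    fix N
    assume N: "1 \<le> N \<and> birkhoff_sum (\<lambda>h. 1 - g h) N f / real N < 1 - b"
    then have "N \<noteq> 0"
      by simp
    with N show "b < birkhoff_sum g N f / real N"
      by (simp add: birkhoff_average_one_minus)
  qed
qed

locale stationary_process = prob_space M
  for M :: "'w measure" +
  fixes Y :: "nat \<Rightarrow> 'w \<Rightarrow> 'a::topological_space"
  assumes Y_measurable[measurable]: "\<And>n. Y n \<in> borel_measurable M"
    and stationary: "\<And>m. distr M path_space (\<lambda>\<omega> k. Y (m + k) \<omega>) = distr M path_space (\<lambda>\<omega> k. Y k \<omega>)"
begin

abbreviation trajectory :: "'w \<Rightarrow> nat \<Rightarrow> 'a" where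
  "trajectory \<omega> \<equiv> (\<lambda>k. Y k \<omega>)"

lemma shifted_trajectory_measurable[measurable]:
  "(\<lambda>\<omega>. path_shift m (trajectory \<omega>)) \<in> measurable M path_space"
  unfolding path_shift_def by (rule measurable_PiM_single') (auto simp: space_PiM)

lemma trajectory_measurable[measurable]: "trajectory \<in> measurable M path_space"
  using shifted_trajectory_measurable[of 0] by (simp add: path_shift_0)

lemma integral_path_shift:
  fixes G :: "(nat \<Rightarrow> 'a) \<Rightarrow> real"
  assumes [measurable]: "G \<in> borel_measurable path_space"
  shows "(\<integral>\<omega>. G (path_shift m (trajectory \<omega>)) \<partial>M) = (\<integral>\<omega>. G (trajectory \<omega>) \<partial>M)"
proof -
  have "(\<integral>\<omega>. G (path_shift m (trajectory \<omega>)) \<partial>M) = integral\<^sup>L (distr M path_space (\<lambda>\<omega> k. Y (m + k) \<omega>)) G"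
    using shifted_trajectory_measurable[of m] by (subst integral_distr) (auto simp: path_shift_def)
  also have "\<dots> = (\<integral>\<omega>. G (trajectory \<omega>) \<partial>M)"
    by (simp add: stationary integral_distr)
  finally show ?thesis .
qed

lemma le_integral_of_birkhoff_sum_ge:
  fixes G :: "(nat \<Rightarrow> 'a) \<Rightarrow> real"
  assumes [measurable]: "G \<in> borel_measurable path_space" and G: "\<And>f. \<bar>G f\<bar> \<le> c"
    and sum_ge: "\<And>N f. (real N - real K) * a \<le> birkhoff_sum G N f"
  shows "a \<le> (\<integral>\<omega>. G (trajectory \<omega>) \<partial>M)"
proof -
  define k where "k = (\<integral>\<omega>. G (trajectory \<omega>) \<partial>M)"
  have integrable: "integrable M (\<lambda>\<omega>. G (path_shift i (trajectory \<omega>)))" for i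
    using G by (intro integrable_const_bound[where B=c]) auto
  have "(real N - real K) * a \<le> real N * k" for N
  proof -
    have "(real N - real K) * a = (\<integral>\<omega>. (real N - real K) * a \<partial>M)"
      by (simp add: prob_space)
    also have "\<dots> \<le> (\<integral>\<omega>. birkhoff_sum G N (trajectory \<omega>) \<partial>M)"
      using sum_ge integrable by (intro integral_mono) (auto simp: birkhoff_sum_def)
    also have "\<dots> = (\<Sum>i<N. \<integral>\<omega>. G (path_shift i (trajectory \<omega>)) \<partial>M)"
      unfolding birkhoff_sum_def using integrable by (rule Bochner_Integration.integral_sum)
    also have "\<dots> = real N * k"
      by (simp add: integral_path_shift k_def)
    finally show ?thesis .
  qed
  then have "\<forall>N\<ge>1. a - real K * a / real N \<le> k"
    by (auto simp: field_simps)
  moreover have "(\<lambda>N. a - real K * a / real N) \<longlonglongrightarrow> a - 0"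
    by (intro tendsto_diff tendsto_const lim_const_over_n)
  ultimately show ?thesis
    unfolding k_def by (intro LIMSEQ_le_const2[where X="\<lambda>N. a - real K * a / real N"]) auto
qed

lemma le_integral_plus_prob_short_blocks_below:
  fixes g :: "(nat \<Rightarrow> 'a) \<Rightarrow> real"
  assumes [measurable]: "g \<in> borel_measurable path_space" and g: "\<And>f. 0 \<le> g f \<and> g f \<le> 1"
    and a: "0 < a" and K: "1 \<le> K"
  shows "a \<le> (\<integral>\<omega>. g (trajectory \<omega>) \<partial>M) + a * prob {\<omega>\<in>space M. trajectory \<omega> \<in> short_blocks_below g a K}"
proof -
  define G where "G f = g f + a * indicator (short_blocks_below g a K) f" for f
  have [measurable]: "G \<in> borel_measurable path_space"
    unfolding G_def by measurable
  have "(real N - real K) * a \<le> birkhoff_sum G N f" for N f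
    unfolding G_def[abs_def] using g a K by (intro birkhoff_sum_ge_short_blocks_below) auto
  moreover have "\<bar>G f\<bar> \<le> 1 + a" for f
    using g[of f] a by (auto simp: G_def indicator_def)
  ultimately have "a \<le> (\<integral>\<omega>. G (trajectory \<omega>) \<partial>M)"
    by (intro le_integral_of_birkhoff_sum_ge) auto
  also have "\<dots> = (\<integral>\<omega>. g (trajectory \<omega>) + a * indicator {\<omega>\<in>space M. trajectory \<omega> \<in> short_blocks_below g a K} \<omega> \<partial>M)"
    by (intro Bochner_Integration.integral_cong) (auto simp: G_def indicator_def)
  also have "\<dots> = (\<integral>\<omega>. g (trajectory \<omega>) \<partial>M) + a * prob {\<omega>\<in>space M. trajectory \<omega> \<in> short_blocks_below g a K}"
    using g by (subst Bochner_Integration.integral_add)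
      (auto intro!: integrable_const_bound[where B=1] simp: emeasure_eq_measure)
  finally show ?thesis .
qed


lemma le_integral_of_AE_block_average_ge:
  fixes g :: "(nat \<Rightarrow> 'a) \<Rightarrow> real"
  assumes [measurable]: "g \<in> borel_measurable path_space" and g: "\<And>f. 0 \<le> g f \<and> g f \<le> 1"
    and block: "AE \<omega> in M. \<exists>n\<ge>1. real n * a \<le> birkhoff_sum g n (trajectory \<omega>)"
  shows "a \<le> (\<integral>\<omega>. g (trajectory \<omega>) \<partial>M)"
proof (cases "a \<le> 0")
  case True
  moreover have "0 \<le> (\<integral>\<omega>. g (trajectory \<omega>) \<partial>M)"
    using g by (intro Bochner_Integration.integral_nonneg) auto
  ultimately show ?thesis
    by linarith
next
  case False
  define S where "S K = {\<omega>\<in>space M. trajectory \<omega> \<in> short_blocks_below g a K}" for K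
  have S_events: "S K \<in> events" for K
    unfolding S_def by measurable
  have "decseq S"
    by (auto simp: decseq_Suc_iff S_def short_blocks_below_def)
  then have "(\<lambda>K. prob (S K)) \<longlonglongrightarrow> prob (\<Inter>K. S K)"
    using S_events by (intro finite_Lim_measure_decseq) auto
  moreover have "prob (\<Inter>K. S K) = 0"
  proof (subst prob_eq_0)
    show "AE \<omega> in M. \<omega> \<notin> (\<Inter>K. S K)"
      using block
    proof (rule eventually_mono)
      fix \<omega>
      assume "\<exists>n\<ge>1. real n * a \<le> birkhoff_sum g n (trajectory \<omega>)"
      then obtain n where "1 \<le> n" "real n * a \<le> birkhoff_sum g n (trajectory \<omega>)"
        by blast
      then have "\<omega> \<notin> S n"
        by (auto simp: S_def short_blocks_below_def not_less intro!: bexI[where x=n])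
      then show "\<omega> \<notin> (\<Inter>K. S K)"
        by blast
    qed
  qed (use S_events in auto)
  ultimately have "(\<lambda>K. (\<integral>\<omega>. g (trajectory \<omega>) \<partial>M) + a * prob (S K))
      \<longlonglongrightarrow> (\<integral>\<omega>. g (trajectory \<omega>) \<partial>M) + a * 0"
    by (intro tendsto_intros) auto
  moreover have "\<forall>K\<ge>1. a \<le> (\<integral>\<omega>. g (trajectory \<omega>) \<partial>M) + a * prob (S K)"
    using False g unfolding S_def by (auto intro!: le_integral_plus_prob_short_blocks_below)
  ultimately show ?thesis
    by (intro LIMSEQ_le_const) auto
qed

lemma le_integral_of_AE_le_birkhoff_limsup:
  fixes g :: "(nat \<Rightarrow> 'a) \<Rightarrow> real"
  assumes g_meas[measurable]: "g \<in> borel_measurable path_space" and g: "\<And>f. 0 \<le> g f \<and> g f \<le> 1"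
    and le: "AE \<omega> in M. ereal c \<le> birkhoff_limsup g (trajectory \<omega>)"
  shows "c \<le> (\<integral>\<omega>. g (trajectory \<omega>) \<partial>M)"
proof (cases "c \<le> 0")
  case True
  moreover have "0 \<le> (\<integral>\<omega>. g (trajectory \<omega>) \<partial>M)"
    using g by (intro Bochner_Integration.integral_nonneg) auto
  ultimately show ?thesis
    by linarith
next
  case False
  show ?thesis
  proof (rule dense_le_bounded[of 0 c])
    fix w
    assume w: "0 < w" "w < c"
    have "AE \<omega> in M. \<exists>n\<ge>1. real n * w \<le> birkhoff_sum g n (trajectory \<omega>)"
      using le
    proof (rule eventually_mono)
      fix \<omega>
      assume c_le: "ereal c \<le> birkhoff_limsup g (trajectory \<omega>)"
      have "ereal w < ereal c"
        using w by simp
      from this c_le have "ereal w < birkhoff_limsup g (trajectory \<omega>)"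
        by (rule less_le_trans)
      then obtain n where n: "ereal w < ereal (birkhoff_sum g n (trajectory \<omega>) / real n)"
        unfolding birkhoff_limsup_def by (blast dest: Limsup_obtain)
      then have "n \<noteq> 0"
        using w by (cases "n = 0") auto
      with n show "\<exists>n\<ge>1. real n * w \<le> birkhoff_sum g n (trajectory \<omega>)"
        by (intro exI[of _ n]) (auto simp: field_simps)
    qed
    then show "w \<le> (\<integral>\<omega>. g (trajectory \<omega>) \<partial>M)"
      by (rule le_integral_of_AE_block_average_ge[OF g_meas g])
  qed (use False in simp)
qed

end

locale ergodic_stationary_process = stationary_process M Y
  for M :: "'w measure" and Y :: "nat \<Rightarrow> 'w \<Rightarrow> 'a::topological_space" +
  assumes ergodic: "ergodic_process M Y"
begin

text \<open>The event \<open>birkhoff_limsup g \<ge> c\<close> is shift invariant, so it has probability 0 or 1, and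
  probability 1 is excluded for \<open>c\<close> above the mean.\<close>
lemma AE_birkhoff_limsup_less:
  fixes g :: "(nat \<Rightarrow> 'a) \<Rightarrow> real"
  assumes g_meas[measurable]: "g \<in> borel_measurable path_space" and g: "\<And>f. 0 \<le> g f \<and> g f \<le> 1"
    and less: "(\<integral>\<omega>. g (trajectory \<omega>) \<partial>M) < c"
  shows "AE \<omega> in M. birkhoff_limsup g (trajectory \<omega>) < ereal c"
proof -
  define W where "W = {f. ereal c \<le> birkhoff_limsup g f}"
  have "W = {f\<in>space path_space. ereal c \<le> birkhoff_limsup g f}"
    by (simp add: W_def space_PiM)
  also have "\<dots> \<in> sets path_space"
    by measurable
  finally have W_sets: "W \<in> sets path_space" .
  have "f \<in> W \<longleftrightarrow> (\<lambda>n. f (Suc n)) \<in> W" for f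
    using birkhoff_limsup_Suc_shift[of g] g by (simp add: W_def)
  with W_sets have "prob {\<omega>\<in>space M. trajectory \<omega> \<in> W} \<in> {0, 1}"
    using ergodic unfolding ergodic_process_def by blast
  moreover have "prob {\<omega>\<in>space M. trajectory \<omega> \<in> W} \<noteq> 1"
  proof
    assume "prob {\<omega>\<in>space M. trajectory \<omega> \<in> W} = 1"
    then have "AE \<omega> in M. ereal c \<le> birkhoff_limsup g (trajectory \<omega>)"
      by (rule AE_prob_1[THEN eventually_mono]) (simp add: W_def)
    then have "c \<le> (\<integral>\<omega>. g (trajectory \<omega>) \<partial>M)"
      by (rule le_integral_of_AE_le_birkhoff_limsup[OF g_meas g])
    with less show False
      by simp
  qed
  ultimately have "prob {\<omega>\<in>space M. trajectory \<omega> \<in> W} = 0"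
    by simp
  then have "AE \<omega> in M. trajectory \<omega> \<notin> W"
    using W_sets by (subst (asm) prob_eq_0) (auto elim!: eventually_mono)
  then show ?thesis
    by (rule eventually_mono) (simp add: W_def not_le)
qed

text \<open>Applying the upper bound to \<open>g\<close> and to \<open>1 - g\<close> squeezes the averages.\<close>
theorem birkhoff_ergodic:
  fixes g :: "(nat \<Rightarrow> 'a) \<Rightarrow> real"
  assumes [measurable]: "g \<in> borel_measurable path_space" and g: "\<And>f. 0 \<le> g f \<and> g f \<le> 1"
  shows "AE \<omega> in M. (\<lambda>N. birkhoff_sum g N (trajectory \<omega>) / real N) \<longlonglongrightarrow> (\<integral>\<omega>. g (trajectory \<omega>) \<partial>M)"
proof -
  define k where "k = (\<integral>\<omega>. g (trajectory \<omega>) \<partial>M)"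
  have complement: "(\<integral>\<omega>. 1 - g (trajectory \<omega>) \<partial>M) = 1 - k"
    unfolding k_def using g
    by (subst Bochner_Integration.integral_diff) (auto intro!: integrable_const_bound[where B=1] simp: prob_space)
  have "AE \<omega> in M. \<forall>j::nat. birkhoff_limsup g (trajectory \<omega>) < ereal (k + 1 / Suc j)
      \<and> birkhoff_limsup (\<lambda>f. 1 - g f) (trajectory \<omega>) < ereal (1 - k + 1 / Suc j)"
    unfolding AE_all_countable
  proof (intro allI AE_conjI)
    show "AE \<omega> in M. birkhoff_limsup g (trajectory \<omega>) < ereal (k + 1 / Suc j)" for j
      using g by (intro AE_birkhoff_limsup_less) (auto simp: k_def)
    show "AE \<omega> in M. birkhoff_limsup (\<lambda>f. 1 - g f) (trajectory \<omega>) < ereal (1 - k + 1 / Suc j)" for j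
      using g by (intro AE_birkhoff_limsup_less) (auto simp: complement)
  qed
  then show ?thesis
    unfolding k_def[symmetric] by (rule eventually_mono) (intro LIMSEQ_of_birkhoff_limsup_bounds)
qed

end

section \<open>Counting reactive segments\<close>

definition reactive_paths :: "'a set \<Rightarrow> 'a set \<Rightarrow> (nat \<Rightarrow> 'a) set" where
  "reactive_paths A B = {f. reactive (\<lambda>k f. f k) A B 0 f}"

lemma reactive_iff_path_shift:
  "reactive X A B m \<omega> \<longleftrightarrow> path_shift m (\<lambda>k. X k \<omega>) \<in> reactive_paths A B"
proof -
  have "(\<forall>i. m < i \<and> i < m + j \<longrightarrow> X i \<omega> \<notin> A \<union> B) \<longleftrightarrow> (\<forall>i. 0 < i \<and> i < j \<longrightarrow> X (m + i) \<omega> \<notin> A \<union> B)"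
    for j
    by (metis add_less_cancel_left le_add_diff_inverse less_imp_le add_0_right zero_less_diff)
  then show ?thesis
    by (simp add: reactive_def reactive_paths_def path_shift_def)
qed

lemma reactive_paths_measurable[measurable]:
  assumes [measurable]: "A \<in> sets borel" "B \<in> sets borel"
  shows "reactive_paths A B \<in> sets (path_space :: (nat \<Rightarrow> 'a::topological_space) measure)"
proof -
  have "reactive_paths A B = {f\<in>space path_space. f 0 \<in> A \<and>
      (\<exists>j. 1 \<le> j \<and> f j \<in> B \<and> (\<forall>i\<in>{0<..<j}. f i \<notin> A \<union> B))}"
    by (auto simp: reactive_paths_def reactive_def space_PiM)
  also have "\<dots> \<in> sets path_space"
    by measurable
  finally show ?thesis .
qed

lemma num_reactive_eq_birkhoff_sum:
  "real (num_reactive X A B N \<omega>) = birkhoff_sum (indicator (reactive_paths A B)) N (\<lambda>k. X k \<omega>)"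
proof -
  have "{m. m < N \<and> reactive X A B m \<omega>} = {..<N} \<inter> {m. path_shift m (\<lambda>k. X k \<omega>) \<in> reactive_paths A B}"
    by (auto simp: reactive_iff_path_shift)
  then show ?thesis
    by (simp add: num_reactive_def birkhoff_sum_def indicator_def of_bool_def[symmetric])
qed

text \<open>The last visit to \<open>B\<close> before \<open>m2\<close> starts a reactive segment from \<open>B\<close> to \<open>A\<close>.\<close>
lemma reactive_between:
  assumes AB: "A \<inter> B = {}"
    and r1: "reactive X A B m1 \<omega>" and r2: "reactive X A B m2 \<omega>" and lt: "m1 < m2"
  shows "\<exists>t. m1 < t \<and> t < m2 \<and> reactive X B A t \<omega>"
proof -
  obtain j1 where j1: "1 \<le> j1" "X (m1 + j1) \<omega> \<in> B" "\<And>i. m1 < i \<and> i < m1 + j1 \<Longrightarrow> X i \<omega> \<notin> A \<union> B"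
    using r1 unfolding reactive_def by blast
  have m2_A: "X m2 \<omega> \<in> A"
    using r2 unfolding reactive_def by blast
  have "m1 + j1 < m2"
    using j1(2) j1(3)[of m2] m2_A lt AB by (cases "m2 < m1 + j1") (auto simp: not_less le_less)
  define t where "t = (GREATEST t. t < m2 \<and> X t \<omega> \<in> B)"
  have t: "t < m2" "X t \<omega> \<in> B"
    using GreatestI_nat[of "\<lambda>t. t < m2 \<and> X t \<omega> \<in> B" "m1 + j1" m2] \<open>m1 + j1 < m2\<close> j1(2)
    unfolding t_def by auto
  have t_max: "y \<le> t" if "y < m2" "X y \<omega> \<in> B" for y
    using Greatest_le_nat[of "\<lambda>t. t < m2 \<and> X t \<omega> \<in> B" y m2] that unfolding t_def by auto
  have "m1 < t"
    using t_max[of "m1 + j1"] \<open>m1 + j1 < m2\<close> j1 by simp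
  define s where "s = (LEAST s. t < s \<and> X s \<omega> \<in> A \<union> B)"
  have s: "t < s" "X s \<omega> \<in> A \<union> B" "s \<le> m2"
    using LeastI[of "\<lambda>s. t < s \<and> X s \<omega> \<in> A \<union> B" m2] Least_le[of "\<lambda>s. t < s \<and> X s \<omega> \<in> A \<union> B" m2]
      t m2_A unfolding s_def by auto
  have between: "X i \<omega> \<notin> A \<union> B" if "t < i" "i < s" for i
    using not_less_Least[of i "\<lambda>s. t < s \<and> X s \<omega> \<in> A \<union> B"] that unfolding s_def by blast
  have "X s \<omega> \<notin> B"
    using t_max[of s] s m2_A AB by (cases "s = m2") auto
  with s have "X s \<omega> \<in> A"
    by blast
  then have "reactive X B A t \<omega>"
    unfolding reactive_def using t s between by (intro conjI exI[of _ "s - t"]) auto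
  then show ?thesis
    using \<open>m1 < t\<close> t by blast
qed

text \<open>Sending every element of \<open>S\<close> but the least to the last element of \<open>T\<close> before it is
  injective, by separation.\<close>
lemma card_le_Suc_if_separated:
  fixes S T :: "nat set"
  assumes "finite T"
    and separated: "\<And>m m'. m \<in> S \<Longrightarrow> m' \<in> S \<Longrightarrow> m < m' \<Longrightarrow> \<exists>t\<in>T. m < t \<and> t < m'"
  shows "card S \<le> card T + 1"
proof (cases "finite S \<and> S \<noteq> {}")
  case True
  define last_before where "last_before m = Max {t\<in>T. t < m}" for m
  have last_before: "last_before m \<in> T" "last_before m < m" "\<And>t. t \<in> T \<Longrightarrow> t < m \<Longrightarrow> t \<le> last_before m"
    if m: "m \<in> S - {Min S}" for m
  proof -
    have "Min S \<in> S"
      using True by (simp add: Min_in)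
    moreover have "Min S < m"
      using m True Min_le[of S m] by fastforce
    ultimately obtain t where "t \<in> T" "t < m"
      using separated[of "Min S" m] m by blast
    then have "{t\<in>T. t < m} \<noteq> {}" "finite {t\<in>T. t < m}"
      using \<open>finite T\<close> by auto
    then show "last_before m \<in> T" "last_before m < m" "\<And>t. t \<in> T \<Longrightarrow> t < m \<Longrightarrow> t \<le> last_before m"
      unfolding last_before_def using Max_in[of "{t\<in>T. t < m}"] by auto
  qed
  have increasing: "last_before m < last_before m'"
    if m: "m \<in> S - {Min S}" and m': "m' \<in> S - {Min S}" and "m < m'" for m m'
  proof -
    obtain t where "t \<in> T" "m < t" "t < m'"
      using separated m m' \<open>m < m'\<close> by blast
    then show ?thesis
      using last_before(2)[OF m] last_before(3)[OF m'] by fastforce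
  qed
  have "inj_on last_before (S - {Min S})"
    by (intro inj_onI) (metis increasing less_irrefl nat_neq_iff)
  moreover have "last_before ` (S - {Min S}) \<subseteq> T"
    using last_before(1) by blast
  ultimately have "card (S - {Min S}) \<le> card T"
    using \<open>finite T\<close> by (rule card_inj_on_le)
  then show ?thesis
    using True by (simp add: Min_in)
next
  case False
  then show ?thesis
    by auto
qed

lemma num_reactive_le_Suc:
  assumes "A \<inter> B = {}"
  shows "num_reactive X A B N \<omega> \<le> num_reactive X B A N \<omega> + 1"
  unfolding num_reactive_def
proof (rule card_le_Suc_if_separated)
  show "\<exists>t\<in>{m. m < N \<and> reactive X B A m \<omega>}. m < t \<and> t < m'"
    if m: "m \<in> {m. m < N \<and> reactive X A B m \<omega>}" and m': "m' \<in> {m. m < N \<and> reactive X A B m \<omega>}"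
      and "m < m'"
    for m m'
  proof -
    obtain t where "m < t" "t < m'" "reactive X B A t \<omega>"
      using reactive_between[OF assms, of X m \<omega> m'] m m' \<open>m < m'\<close> by auto
    with m' show ?thesis
      by (intro bexI[of _ t]) auto
  qed
qed simp

lemma LIMSEQ_average_if_close:
  fixes a b :: "nat \<Rightarrow> nat"
  assumes "\<And>N. a N \<le> b N + 1" "\<And>N. b N \<le> a N + 1" and a: "(\<lambda>N. real (a N) / real N) \<longlonglongrightarrow> k"
  shows "(\<lambda>N. real (b N) / real N) \<longlonglongrightarrow> k"
proof -
  have "(\<lambda>N. (real (b N) - real (a N)) / real N) \<longlonglongrightarrow> 0"
  proof (rule Lim_null_comparison[where g="\<lambda>N. 1 / real N"])
    have "\<bar>real (b N) - real (a N)\<bar> \<le> 1" for N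
      using assms(1,2)[of N] by linarith
    then show "eventually (\<lambda>N. norm ((real (b N) - real (a N)) / real N) \<le> 1 / real N) sequentially"
      by (simp add: divide_right_mono)
  qed (rule lim_1_over_n)
  from tendsto_add[OF a this] show ?thesis
    by (simp add: diff_divide_distrib)
qed

section \<open>The stationary chain and its reactive segments\<close>

locale transition_density_chain = transition_density p \<pi> + prob_space M
  for p :: "'a::euclidean_space \<Rightarrow> 'a \<Rightarrow> real" and \<pi> and M :: "'w measure" +
  fixes X :: "nat \<Rightarrow> 'w \<Rightarrow> 'a"
  assumes X_meas[measurable]: "\<And>n. X n \<in> borel_measurable M"
    and X_law: "\<And>n C. (\<forall>i. C i \<in> sets borel) \<Longrightarrow>
          prob {\<omega>\<in>space M. \<forall>i\<le>n. X i \<omega> \<in> C i} =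
          (LINT x|lborel. indicator (C 0) x * \<pi> x * path_prob p n (\<lambda>i. C (Suc i)) x)"
begin

text \<open>Prefixing the constraints by one unconstrained step does not change the law, by invariance
  of \<open>\<pi>\<close>.\<close>
lemma prob_shift_eq:
  "(\<And>i. C i \<in> sets borel) \<Longrightarrow>
    prob {\<omega>\<in>space M. \<forall>i\<le>n. X (m + i) \<omega> \<in> C i} = prob {\<omega>\<in>space M. \<forall>i\<le>n. X i \<omega> \<in> C i}"
proof (induction m arbitrary: n C)
  case (Suc m)
  have "{\<omega>\<in>space M. \<forall>i\<le>n. X (Suc m + i) \<omega> \<in> C i}
      = {\<omega>\<in>space M. \<forall>i\<le>Suc n. X (m + i) \<omega> \<in> case_nat UNIV C i}"
  proof -
    have "(\<forall>i\<le>Suc n. X (m + i) \<omega> \<in> case_nat UNIV C i) \<longleftrightarrow> (\<forall>i\<le>n. X (Suc m + i) \<omega> \<in> C i)" for \<omega>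
      unfolding less_Suc_eq_le[symmetric] All_less_Suc2 by simp
    then show ?thesis
      by simp
  qed
  also have "prob \<dots> = prob {\<omega>\<in>space M. \<forall>i\<le>Suc n. X i \<omega> \<in> case_nat UNIV C i}"
    using Suc by (intro Suc.IH) (simp split: nat.split)
  also have "\<dots> = (LINT x|lborel. \<pi> x * path_prob p (Suc n) C x)"
    using Suc by (subst X_law) (auto split: nat.split)
  also have "\<dots> = (LINT x|lborel. indicator (C 0) x * \<pi> x * path_prob p n (\<lambda>i. C (Suc i)) x)"
    by (rule integral_density_path_prob_Suc) (fact Suc.prems)
  also have "\<dots> = prob {\<omega>\<in>space M. \<forall>i\<le>n. X i \<omega> \<in> C i}"
    using Suc.prems by (simp add: X_law)
  finally show ?case
    by simp
qed simp

lemma stationary: "distr M path_space (\<lambda>\<omega> k. X (m + k) \<omega>) = distr M path_space (\<lambda>\<omega> k. X k \<omega>)"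
proof (rule measure_eqI_PiM_infinite)
  have shifted[measurable]: "(\<lambda>\<omega> k. X (l + k) \<omega>) \<in> measurable M path_space" for l
    by (rule measurable_PiM_single') (auto simp: space_PiM)
  show "finite_measure (distr M path_space (\<lambda>\<omega> k. X (m + k) \<omega>))"
    by (intro prob_space.finite_measure prob_space_distr shifted)
  fix D :: "nat \<Rightarrow> 'a set" and J :: "nat set"
  assume J: "finite J" and D: "\<And>i. i \<in> J \<Longrightarrow> D i \<in> sets borel"
  define n where "n = Max (insert 0 J)"
  define C where "C i = (if i \<in> J then D i else UNIV)" for i
  have C: "C i \<in> sets borel" for i
    using D by (simp add: C_def)
  have "prod_emb UNIV (\<lambda>_. borel) J (Pi\<^sub>E J D) = {f. \<forall>i\<le>n. f i \<in> C i}"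
    using J by (auto simp: prod_emb_def PiE_def Pi_def C_def extensional_def n_def)
  moreover have "prod_emb UNIV (\<lambda>_. borel) J (Pi\<^sub>E J D) \<in> sets path_space"
    using J D by (intro sets_PiM_I) auto
  ultimately have cylinder: "emeasure (distr M path_space (\<lambda>\<omega> k. X (l + k) \<omega>)) (prod_emb UNIV (\<lambda>_. borel) J (Pi\<^sub>E J D))
      = prob {\<omega>\<in>space M. \<forall>i\<le>n. X (l + i) \<omega> \<in> C i}" for l
    by (simp add: emeasure_distr emeasure_eq_measure vimage_def Int_def conj_commute)
  then show "emeasure (distr M path_space (\<lambda>\<omega> k. X (m + k) \<omega>)) (prod_emb UNIV (\<lambda>_. borel) J (Pi\<^sub>E J D))
      = emeasure (distr M path_space (\<lambda>\<omega> k. X k \<omega>)) (prod_emb UNIV (\<lambda>_. borel) J (Pi\<^sub>E J D))"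
    using cylinder[of m] cylinder[of 0] prob_shift_eq[OF C] by simp
qed simp_all

sublocale stationary_process M X
  by unfold_locales (fact X_meas stationary)+

end

locale reactive_chain = transition_density_chain p \<pi> M X + committor_setting p \<pi> A B
  for p :: "'a::euclidean_space \<Rightarrow> 'a \<Rightarrow> real" and \<pi> and M :: "'w measure" and X A B
begin

definition entrance_pattern :: "nat \<Rightarrow> nat \<Rightarrow> 'a set" where
  "entrance_pattern n i = (if i = 0 then A else if i \<le> n then - (A \<union> B) else if i = Suc n then B else UNIV)"

definition reactive_at :: "nat \<Rightarrow> 'w set" where
  "reactive_at n = {\<omega>\<in>space M. \<forall>i\<le>Suc n. X i \<omega> \<in> entrance_pattern n i}"

lemma reactive_at_events: "reactive_at n \<in> events"
proof -
  have [measurable]: "entrance_pattern n i \<in> sets borel" for i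
    by (simp add: entrance_pattern_def)
  show ?thesis
    unfolding reactive_at_def by measurable
qed

lemma prob_reactive_at: "prob (reactive_at n) = (LINT x|lborel. indicator A x * \<pi> x * entrance_prob n x)"
proof -
  have "path_prob p (Suc n) (\<lambda>i. entrance_pattern n (Suc i)) x = entrance_prob n x" for x
    unfolding entrance_prob_def by (rule path_prob_cong) (auto simp: entrance_pattern_def)
  then show ?thesis
    unfolding reactive_at_def by (subst X_law) (auto simp: entrance_pattern_def)
qed

lemma disjoint_reactive_at: "disjoint_family reactive_at"
proof -
  have "\<omega> \<notin> reactive_at n'" if "n < n'" "\<omega> \<in> reactive_at n" for \<omega> n n'
  proof
    assume "\<omega> \<in> reactive_at n'"
    then have "X (Suc n) \<omega> \<in> entrance_pattern n' (Suc n)"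
      using that(1) by (simp add: reactive_at_def)
    moreover have "X (Suc n) \<omega> \<in> entrance_pattern n (Suc n)"
      using that(2) by (simp add: reactive_at_def)
    ultimately show False
      using that(1) by (simp add: entrance_pattern_def)
  qed
  then show ?thesis
    unfolding disjoint_family_on_def by (metis disjoint_iff nat_neq_iff)
qed

lemma reactive_paths_eq_UN_reactive_at:
  "{\<omega>\<in>space M. trajectory \<omega> \<in> reactive_paths A B} = (\<Union>n. reactive_at n)"
proof safe
  fix \<omega>
  assume "\<omega> \<in> space M" "trajectory \<omega> \<in> reactive_paths A B"
  then obtain j where "1 \<le> j" "X 0 \<omega> \<in> A" "X j \<omega> \<in> B" "\<And>i. 0 < i \<and> i < j \<Longrightarrow> X i \<omega> \<notin> A \<union> B"
    by (auto simp: reactive_paths_def reactive_def)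
  with \<open>\<omega> \<in> space M\<close> have "\<omega> \<in> reactive_at (j - 1)"
    by (auto simp: reactive_at_def entrance_pattern_def le_Suc_eq)
  then show "\<omega> \<in> (\<Union>n. reactive_at n)"
    by blast
next
  fix \<omega> n
  assume "\<omega> \<in> reactive_at n"
  then have pattern: "X i \<omega> \<in> entrance_pattern n i" if "i \<le> Suc n" for i
    using that by (simp add: reactive_at_def)
  from \<open>\<omega> \<in> reactive_at n\<close> show "\<omega> \<in> space M"
    by (simp add: reactive_at_def)
  have "X 0 \<omega> \<in> A" "X (Suc n) \<omega> \<in> B"
    using pattern[of 0] pattern[of "Suc n"] by (simp_all add: entrance_pattern_def)
  moreover have "X i \<omega> \<notin> A \<union> B" if "0 < i" "i < Suc n" for i
    using pattern[of i] that by (simp add: entrance_pattern_def)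
  ultimately show "trajectory \<omega> \<in> reactive_paths A B"
    unfolding reactive_paths_def reactive_def by (intro CollectI conjI exI[where x="Suc n"]) auto
qed

lemma prob_reactive_paths:
  "prob {\<omega>\<in>space M. trajectory \<omega> \<in> reactive_paths A B}
     = (LINT x|lborel. indicator A x * \<pi> x * transition_op q x)"
proof -
  define f where "f n x = indicator A x * \<pi> x * entrance_prob n x" for n x
  have f_nonneg: "0 \<le> f n x" for n x
    using entrance_prob_nonneg[of n x] pi_pos[of x] by (simp add: f_def)
  have "(\<lambda>n. prob (reactive_at n)) sums prob {\<omega>\<in>space M. trajectory \<omega> \<in> reactive_paths A B}"
    unfolding reactive_paths_eq_UN_reactive_at
    using reactive_at_events disjoint_reactive_at by (intro finite_measure_UNION) auto
  then have sums_prob: "(\<lambda>n. LINT x|lborel. f n x) sums prob {\<omega>\<in>space M. trajectory \<omega> \<in> reactive_paths A B}"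
    by (simp add: prob_reactive_at f_def)
  have "(\<lambda>n. LINT x|lborel. f n x) sums (LINT x|lborel. (\<Sum>n. f n x))"
  proof (rule sums_integral)
    show "integrable lborel (f n)" for n
    proof -
      have "integrable lborel (\<lambda>x. \<pi> x * (indicator A x * entrance_prob n x))"
        using entrance_prob_nonneg entrance_prob_le_1
        by (intro integrable_density_mult[where c=1]) (auto simp: indicator_def)
      moreover have "f n = (\<lambda>x. \<pi> x * (indicator A x * entrance_prob n x))"
        by (simp add: fun_eq_iff f_def)
      ultimately show ?thesis
        by simp
    qed
    show "AE x in lborel. summable (\<lambda>n. norm (f n x))"
      using summable_entrance_prob f_nonneg by (auto simp: f_def intro!: summable_mult)
    show "summable (\<lambda>n. LINT x|lborel. norm (f n x))"
      using sums_prob f_nonneg by (simp add: sums_iff)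
  qed
  moreover have "(\<Sum>n. f n x) = indicator A x * \<pi> x * transition_op q x" for x
    unfolding f_def transition_op_committor using summable_entrance_prob by (rule suminf_mult)
  ultimately show ?thesis
    using sums_prob sums_unique2 by simp
qed

end

locale ergodic_reactive_chain = reactive_chain p \<pi> M X A B
  for p :: "'a::euclidean_space \<Rightarrow> 'a \<Rightarrow> real" and \<pi> and M :: "'w measure" and X A B +
  assumes X_ergodic: "ergodic_process M X"
begin

sublocale ergodic_stationary_process M X
  by unfold_locales (fact X_ergodic)

lemma AE_reactive_rate_AB:
  "AE \<omega> in M. (\<lambda>N. real (num_reactive X A B N \<omega>) / real N)
     \<longlonglongrightarrow> (LINT x|lborel. indicator A x * \<pi> x * transition_op q x)"
proof -
  have "(\<integral>\<omega>. indicator (reactive_paths A B) (trajectory \<omega>) \<partial>M)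
      = (\<integral>\<omega>. indicator {\<omega>\<in>space M. trajectory \<omega> \<in> reactive_paths A B} \<omega> \<partial>M)"
    by (intro Bochner_Integration.integral_cong) (auto simp: indicator_def)
  also have "\<dots> = (LINT x|lborel. indicator A x * \<pi> x * transition_op q x)"
    using prob_reactive_paths by (simp add: Int_absorb2 subset_iff)
  finally have mean: "(\<integral>\<omega>. indicator (reactive_paths A B) (trajectory \<omega>) \<partial>M)
      = (LINT x|lborel. indicator A x * \<pi> x * transition_op q x)" .
  have "indicator (reactive_paths A B) \<in> borel_measurable path_space"
    by measurable
  from birkhoff_ergodic[OF this] show ?thesis
    unfolding num_reactive_eq_birkhoff_sum mean by (simp add: indicator_def)
qed

lemma AE_reactive_rate_BA:
  "AE \<omega> in M. (\<lambda>N. real (num_reactive X B A N \<omega>) / real N)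
     \<longlonglongrightarrow> (LINT x|lborel. indicator A x * \<pi> x * transition_op q x)"
  using AE_reactive_rate_AB
proof (rule eventually_mono)
  fix \<omega>
  have "B \<inter> A = {}"
    using AB_disj by blast
  then show "(\<lambda>N. real (num_reactive X A B N \<omega>) / real N) \<longlonglongrightarrow> (LINT x|lborel. indicator A x * \<pi> x * transition_op q x)
      \<Longrightarrow> (\<lambda>N. real (num_reactive X B A N \<omega>) / real N) \<longlonglongrightarrow> (LINT x|lborel. indicator A x * \<pi> x * transition_op q x)"
    by (rule LIMSEQ_average_if_close[OF num_reactive_le_Suc[OF AB_disj] num_reactive_le_Suc])
qed

end

theorem proposition2p6:
  fixes p :: "real^'d \<Rightarrow> real^'d \<Rightarrow> real"
    and \<pi> :: "real^'d \<Rightarrow> real"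
    and M :: "'w measure"
    and X :: "nat \<Rightarrow> 'w \<Rightarrow> real^'d"
    and A B :: "(real^'d) set"
  assumes p_meas: "(\<lambda>(x, y). p x y) \<in> borel_measurable (borel \<Otimes>\<^sub>M borel)"
    and p_pos: "\<And>x y. p x y > 0"
    and p_int: "\<And>x. integrable lborel (p x)"
    and p_norm: "\<And>x. (LINT y|lborel. p x y) = 1"
    and pi_meas: "\<pi> \<in> borel_measurable borel"
    and pi_pos: "\<And>x. \<pi> x > 0"
    and pi_int: "integrable lborel \<pi>"
    and pi_norm: "(LINT x|lborel. \<pi> x) = 1"
    and pi_invariant: "AE y in lborel. (LINT x|lborel. \<pi> x * p x y) = \<pi> y"
    and unique_invariant: "\<And>\<nu>. prob_space \<nu> \<Longrightarrow> sets \<nu> = sets borel \<Longrightarrow>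
          (\<forall>C\<in>sets borel. measure \<nu> C = (\<integral>x. (LINT y|lborel. indicator C y * p x y) \<partial>\<nu>)) \<Longrightarrow>
          \<nu> = density lborel \<pi>"
    and M_prob: "prob_space M"
    and X_meas: "\<And>n. X n \<in> borel_measurable M"
    and X_law: "\<And>n C. (\<forall>i. C i \<in> sets borel) \<Longrightarrow>
          measure M {\<omega>\<in>space M. \<forall>i\<le>n. X i \<omega> \<in> C i} =
          (LINT x|lborel. indicator (C 0) x * \<pi> x * path_prob p n (\<lambda>i. C (Suc i)) x)"
    and X_ergodic: "ergodic_process M X"
    and A_closed: "closed A" and B_closed: "closed B"
    and A_smooth: "smooth_boundary A" and B_smooth: "smooth_boundary B"
    and AB_disj: "A \<inter> B = {}"
    and AB_compl: "- (A \<union> B) \<noteq> {}"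
  shows "let q = committor p A B;
             kAB = (LINT x|lborel. indicator A x * \<pi> x * (LINT y|lborel. p x y * q y))
         in (AE \<omega> in M. (\<lambda>N. real (num_reactive X A B N \<omega>) / real N) \<longlonglongrightarrow> kAB)
          \<and> (AE \<omega> in M. (\<lambda>N. real (num_reactive X B A N \<omega>) / real N) \<longlonglongrightarrow> kAB)
          \<and> kAB = (LINT x|lborel. indicator B x * \<pi> x * (LINT y|lborel. p x y * (1 - q y)))
          \<and> kAB = 1/2 * (LINT x|lborel. \<pi> x * (LINT y|lborel. p x y * (q y - q x)^2))"
proof -
  have "transition_density p \<pi>"
    by unfold_locales (fact p_meas p_pos p_int p_norm pi_meas pi_pos pi_int pi_norm pi_invariant)+
  moreover have "transition_density_chain_axioms p \<pi> M X"
    by unfold_locales (fact X_meas X_law)+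
  moreover have "committor_setting_axioms A B"
    by unfold_locales (simp_all add: borel_closed A_closed B_closed AB_disj)
  ultimately interpret ergodic_reactive_chain p \<pi> M X A B
    using M_prob X_ergodic
    by (simp add: ergodic_reactive_chain_def ergodic_reactive_chain_axioms_def reactive_chain_def
        transition_density_chain_def committor_setting_def)
  show ?thesis
    unfolding Let_def
    using AE_reactive_rate_AB AE_reactive_rate_BA committor_flux_A_eq_B committor_energy by blast
qed

end
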